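(* Let $f:\mathbb{R}^n\to\mathbb{R}$ be a continuously differentiable convex function and $s$ a positive integer. Let $h(x)=\sum_{i=1}^n h_i(x_i)$ be separable, with each $h_i:\mathbb{R}\to\mathbb{R}$ continuously differentiable and strictly convex, and suppose $f$ is $L_h$-smooth relative to $h$ (i.e. $L_h h-f$ is convex) for some $L_h>0$. If $x\in C_s$ is a CW-minimum point of $f$, then $$x\in\operatorname*{argmin}_{y\in C_s}\ \nabla f(x)^T(y-x)+L_h D_h(y,x),$$ i.e. $x$ is $L_h$-Bregman stationary with respect to $h$.
   Context: $C_s=\{x\in\mathbb{R}^n:\|x\|_0\le s\}$ where $\|x\|_0$ is the number of nonzero entries. $D_h(y,x)=h(y)-h(x)-\nabla h(x)^T(y-x)$. $I_1(x)=\{i:x_i\ne0\}$; $e_j$ is the $j$-th standard basis vector. A point $x\in C_s$ is a CW-minimum point of $f$ if either $\|x\|_0<s$ and $f(x)\le f(x+te_i)$ for all $t\in\mathbb{R}$ and all $i=1,\dots,n$; or $\|x\|_0=s$ and $f(x)\le f(x-x_ie_i+te_j)$ for all $t\in\mathbb{R}$, all $i\in I_1(x)$ and all $j=1,\dots,n$. *)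

theory Defs
  imports "HOL-Analysis.Analysis"
begin

definition strictly_convex_on :: "real set \<Rightarrow> (real \<Rightarrow> real) \<Rightarrow> bool" where
  "strictly_convex_on S g \<longleftrightarrow> convex S \<and> (\<forall>a\<in>S. \<forall>b\<in>S. \<forall>u::real. a \<noteq> b \<and> 0 < u \<and> u < 1 \<longrightarrow>
     g (u * a + (1 - u) * b) < u * g a + (1 - u) * g b)"

definition l0 :: "real^'n \<Rightarrow> nat" where
  "l0 x = card {i. x $ i \<noteq> 0}"

definition sparse_set :: "nat \<Rightarrow> (real^'n) set" where
  "sparse_set s = {x. l0 x \<le> s}"

definition supp1 :: "real^'n \<Rightarrow> 'n set" where
  "supp1 x = {i. x $ i \<noteq> 0}"

definition bregman :: "(real^'n \<Rightarrow> real) \<Rightarrow> (real^'n \<Rightarrow> real^'n) \<Rightarrow> real^'n \<Rightarrow> real^'n \<Rightarrow> real" where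
  "bregman h gh y x = h y - h x - gh x \<bullet> (y - x)"

definition CW_minimum :: "(real^'n \<Rightarrow> real) \<Rightarrow> nat \<Rightarrow> real^'n \<Rightarrow> bool" where
  "CW_minimum f s x \<longleftrightarrow> x \<in> sparse_set s \<and>
     ((l0 x < s \<and> (\<forall>t::real. \<forall>i. f x \<le> f (x + t *\<^sub>R axis i 1))) \<or>
      (l0 x = s \<and> (\<forall>t::real. \<forall>i\<in>supp1 x. \<forall>j. f x \<le> f (x - (x $ i) *\<^sub>R axis i 1 + t *\<^sub>R axis j 1))))"

end

theory Submission imports Defs begin

text \<open>Relative smoothness gives the descent inequality \<open>f y \<le> f x + \<psi> y\<close> for the model
  \<open>\<psi> y = \<nabla>f(x)\<^sup>T(y - x) + L D\<^sub>h(y, x)\<close>, which vanishes at \<open>x\<close>; hence a CW-minimum of \<open>f\<close>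
  is also a CW-minimum of \<open>\<psi>\<close>. Since \<open>h\<close> is separable, so is \<open>\<psi>\<close>, and for a separable
  function CW-minimality already means minimality over \<open>C\<^sub>s\<close>: if \<open>x\<close> has full support size \<open>s\<close>,
  an injection from the new support coordinates of \<open>y\<close> into the support coordinates of \<open>x\<close>
  that \<open>y\<close> drops splits the change from \<open>x\<close> to \<open>y\<close> into single-coordinate moves and swaps.\<close>

lemma convex_on_restrict_line:
  fixes G :: "'a::real_vector \<Rightarrow> real"
  assumes "convex_on UNIV G"
  shows "convex_on UNIV (\<lambda>t. G (x + t *\<^sub>R d))"
proof (intro convex_onI convex_UNIV)
  fix t a b :: real assume "0 < t" "t < 1"
  have "x + ((1 - t) * a + t * b) *\<^sub>R d = (1 - t) *\<^sub>R (x + a *\<^sub>R d) + t *\<^sub>R (x + b *\<^sub>R d)"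
    by (simp add: algebra_simps flip: scaleR_add_left)
  then show "G (x + ((1 - t) *\<^sub>R a + t *\<^sub>R b) *\<^sub>R d) \<le> (1 - t) * G (x + a *\<^sub>R d) + t * G (x + b *\<^sub>R d)"
    using convex_onD[OF assms, of t] \<open>0 < t\<close> \<open>t < 1\<close> by auto
qed

lemma convex_on_gradient_inequality:
  fixes G :: "'a::real_normed_vector \<Rightarrow> real"
  assumes "convex_on UNIV G" and "(G has_derivative G') (at x)"
  shows "G x + G' (y - x) \<le> G y"
proof -
  let ?g = "\<lambda>t. G (x + t *\<^sub>R (y - x))"
  have "((\<lambda>t. x + t *\<^sub>R (y - x)) has_derivative (\<lambda>t. t *\<^sub>R (y - x))) (at 0)"
    by (auto intro!: derivative_eq_intros)
  from has_derivative_compose[OF this, of G G'] assms(2)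
  have "(?g has_derivative (\<lambda>t. G' (t *\<^sub>R (y - x)))) (at 0)" by simp
  moreover have "G' (t *\<^sub>R (y - x)) = G' (y - x) * t" for t
    using has_derivative_linear[OF assms(2)] by (simp add: linear_scale)
  ultimately have "(?g has_real_derivative G' (y - x)) (at 0)"
    by (simp add: has_field_derivative_def)
  then have "G' (y - x) * (1 - 0) \<le> ?g 1 - ?g 0"
    by (intro convex_on_imp_above_tangent[OF convex_on_restrict_line[OF assms(1)]])
       (auto simp: has_field_derivative_at_within)
  then show ?thesis by simp
qed

lemma separable_has_derivative:
  assumes "\<And>i t. (hi i has_real_derivative dhi i t) (at t)"
  shows "((\<lambda>z::real^'n. \<Sum>i\<in>UNIV. hi i (z $ i)) has_derivative (\<lambda>v. (\<chi> i. dhi i (z $ i)) \<bullet> v)) (at z)"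
proof -
  have "((\<lambda>z. hi i (z $ i)) has_derivative (\<lambda>v. dhi i (z $ i) * v $ i)) (at z)" for i
  proof -
    have "((\<lambda>z::real^'n. z $ i) has_derivative (\<lambda>v. v $ i)) (at z)"
      by (rule bounded_linear.has_derivative[OF bounded_linear_vec_nth has_derivative_ident])
    from has_derivative_compose[OF this assms[of i "z $ i", unfolded has_field_derivative_def]]
    show ?thesis by (simp add: mult.commute)
  qed
  then show ?thesis
    unfolding inner_vec_def by (auto intro!: has_derivative_sum)
qed

lemma relative_smoothness_descent:
  fixes f h :: "real^'n \<Rightarrow> real" and gf gh :: "real^'n \<Rightarrow> real^'n"
  assumes "(f has_derivative (\<lambda>v. gf x \<bullet> v)) (at x)"
    and "(h has_derivative (\<lambda>v. gh x \<bullet> v)) (at x)"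
    and "convex_on UNIV (\<lambda>z. L * h z - f z)"
  shows "f y \<le> f x + gf x \<bullet> (y - x) + L * bregman h gh y x"
proof -
  have "((\<lambda>z. L * h z - f z) has_derivative (\<lambda>v. L * (gh x \<bullet> v) - gf x \<bullet> v)) (at x)"
    using assms(1,2) by (auto intro!: derivative_eq_intros)
  from convex_on_gradient_inequality[OF assms(3) this, of y]
  show ?thesis by (simp add: bregman_def algebra_simps)
qed

lemma sum_diff_eq_sum_on_changed:
  fixes \<phi> :: "'n::finite \<Rightarrow> 'a \<Rightarrow> 'b::ab_group_add"
  assumes "\<And>k. k \<notin> S \<Longrightarrow> z k = x k"
  shows "(\<Sum>k\<in>UNIV. \<phi> k (z k)) - (\<Sum>k\<in>UNIV. \<phi> k (x k)) = (\<Sum>k\<in>S. \<phi> k (z k) - \<phi> k (x k))"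
  by (subst sum_subtractf[symmetric], rule sum.mono_neutral_right) (auto simp: assms)

lemma sum_nonneg_by_matching:
  fixes d :: "'a \<Rightarrow> real"
  assumes "finite A" "finite B" "card B \<le> card A"
    and A_nonneg: "\<And>i. i \<in> A \<Longrightarrow> 0 \<le> d i"
    and pair_nonneg: "\<And>i j. i \<in> A - B \<Longrightarrow> j \<in> B - A \<Longrightarrow> 0 \<le> d i + d j"
  shows "0 \<le> (\<Sum>k\<in>A \<union> B. d k)"
proof -
  have "card (B - A) \<le> card (A - B)"
    using assms(1-3) card_Int_Diff[of A B] card_Int_Diff[of B A] by (simp add: Int_commute)
  then obtain p where p: "p ` (B - A) \<subseteq> A - B" "inj_on p (B - A)"
    using card_le_inj[of "B - A" "A - B"] assms(1,2) by auto
  define P where "P = p ` (B - A)"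
  have "P \<subseteq> A" using p by (auto simp: P_def)
  have "(\<Sum>k\<in>A \<union> B. d k) = (\<Sum>k\<in>A. d k) + (\<Sum>k\<in>B - A. d k)"
    using assms(1,2) sum.union_disjoint[of A "B - A" d] by simp
  also have "(\<Sum>k\<in>A. d k) = (\<Sum>k\<in>A - P. d k) + (\<Sum>k\<in>B - A. d (p k))"
    using sum.subset_diff[OF \<open>P \<subseteq> A\<close> assms(1), of d] sum.reindex[OF p(2), of d]
    by (simp add: P_def)
  finally have "(\<Sum>k\<in>A \<union> B. d k) = (\<Sum>k\<in>A - P. d k) + (\<Sum>k\<in>B - A. d (p k) + d k)"
    by (simp add: sum.distrib)
  moreover have "0 \<le> (\<Sum>k\<in>A - P. d k)" using A_nonneg by (intro sum_nonneg) auto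
  moreover have "0 \<le> (\<Sum>k\<in>B - A. d (p k) + d k)" using p pair_nonneg by (intro sum_nonneg) auto
  ultimately show ?thesis by simp
qed

lemma CW_minimum_mono:
  assumes "CW_minimum f s x" and "\<And>z. f z - f x \<le> g z - g x"
  shows "CW_minimum g s x"
  using assms unfolding CW_minimum_def by (metis diff_ge_0_iff_ge order_trans)

lemma CW_minimum_separable_imp_sparse_minimum:
  fixes \<phi> :: "'n::finite \<Rightarrow> real \<Rightarrow> real"
  assumes cw: "CW_minimum (\<lambda>z. \<Sum>k\<in>UNIV. \<phi> k (z $ k)) s x" and y: "y \<in> sparse_set s"
  shows "(\<Sum>k\<in>UNIV. \<phi> k (x $ k)) \<le> (\<Sum>k\<in>UNIV. \<phi> k (y $ k))"
proof -
  define d where "d k = \<phi> k (y $ k) - \<phi> k (x $ k)" for k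
  define A where "A = supp1 x"
  define B where "B = supp1 y"
  have change: "0 \<le> (\<Sum>k\<in>S. \<phi> k (z $ k) - \<phi> k (x $ k))"
    if "(\<Sum>k\<in>UNIV. \<phi> k (x $ k)) \<le> (\<Sum>k\<in>UNIV. \<phi> k (z $ k))" "\<And>k. k \<notin> S \<Longrightarrow> z $ k = x $ k"
    for z S
    using sum_diff_eq_sum_on_changed[of S "\<lambda>k. z $ k" "\<lambda>k. x $ k" \<phi>] that by simp
  from cw consider
      (lt) "\<forall>t i. (\<Sum>k\<in>UNIV. \<phi> k (x $ k)) \<le> (\<Sum>k\<in>UNIV. \<phi> k ((x + t *\<^sub>R axis i 1) $ k))"
    | (eq) "l0 x = s" "\<forall>t. \<forall>i\<in>A. \<forall>j. (\<Sum>k\<in>UNIV. \<phi> k (x $ k))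
          \<le> (\<Sum>k\<in>UNIV. \<phi> k ((x - (x $ i) *\<^sub>R axis i 1 + t *\<^sub>R axis j 1) $ k))"
    unfolding CW_minimum_def A_def by blast
  then have "0 \<le> (\<Sum>k\<in>A \<union> B. d k)"
  proof cases
    case lt
    have "0 \<le> d k" for k
      using change[OF lt[rule_format, of "y $ k - x $ k" k], of "{k}"] by (simp add: d_def axis_def)
    then show ?thesis by (simp add: sum_nonneg)
  next
    case eq
    have swap: "0 \<le> (\<Sum>k\<in>{i, j}. \<phi> k ((x - (x $ i) *\<^sub>R axis i 1 + t *\<^sub>R axis j 1) $ k) - \<phi> k (x $ k))"
      if "i \<in> A" for i j t
      using eq(2) that by (intro change) (auto simp: axis_def)
    show ?thesis
    proof (rule sum_nonneg_by_matching)
      show "card B \<le> card A"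
        using eq(1) y by (simp add: A_def B_def supp1_def l0_def sparse_set_def)
      show "0 \<le> d i" if "i \<in> A" for i
        using swap[OF that, where j = i and t = "y $ i"] by (simp add: d_def axis_def)
      show "0 \<le> d i + d j" if "i \<in> A - B" "j \<in> B - A" for i j
      proof -
        have "i \<noteq> j" using that by blast
        with swap[of i, where j = j and t = "y $ j"] that show ?thesis
          by (auto simp: d_def axis_def A_def B_def supp1_def)
      qed
    qed simp_all
  qed
  moreover have "(\<Sum>k\<in>UNIV. \<phi> k (y $ k)) - (\<Sum>k\<in>UNIV. \<phi> k (x $ k)) = (\<Sum>k\<in>A \<union> B. d k)"
    unfolding d_def by (rule sum_diff_eq_sum_on_changed) (auto simp: A_def B_def supp1_def)
  ultimately show ?thesis by simp
qed

lemma bregman_separable: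
  "bregman (\<lambda>z. \<Sum>i\<in>UNIV. hi i (z $ i)) (\<lambda>z. \<chi> i. dhi i (z $ i)) y x
     = (\<Sum>i\<in>UNIV. hi i (y $ i) - hi i (x $ i) - dhi i (x $ i) * (y $ i - x $ i))"
  by (simp add: bregman_def inner_vec_def sum_subtractf)

theorem theorem4p12:
  fixes f :: "real^'n \<Rightarrow> real" and gf :: "real^'n \<Rightarrow> real^'n"
    and hi :: "'n \<Rightarrow> real \<Rightarrow> real" and dhi :: "'n \<Rightarrow> real \<Rightarrow> real"
    and L :: real and s :: nat and x :: "real^'n"
  assumes f_deriv: "\<And>z. (f has_derivative (\<lambda>v. gf z \<bullet> v)) (at z)"
    and gf_cont: "continuous_on UNIV gf"
    and f_convex: "convex_on UNIV f"
    and s_pos: "0 < s"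
    and hi_deriv: "\<And>i t. (hi i has_real_derivative dhi i t) (at t)"
    and dhi_cont: "\<And>i. continuous_on UNIV (dhi i)"
    and hi_strict: "\<And>i. strictly_convex_on UNIV (hi i)"
    and L_pos: "0 < L"
    and rel_smooth: "convex_on UNIV (\<lambda>z. L * (\<Sum>i\<in>UNIV. hi i (z $ i)) - f z)"
    and cw: "CW_minimum f s x"
  shows "x \<in> sparse_set s \<and>
    (\<forall>y\<in>sparse_set s.
       gf x \<bullet> (x - x) + L * bregman (\<lambda>z. \<Sum>i\<in>UNIV. hi i (z $ i)) (\<lambda>z. \<chi> i. dhi i (z $ i)) x x
       \<le> gf x \<bullet> (y - x) + L * bregman (\<lambda>z. \<Sum>i\<in>UNIV. hi i (z $ i)) (\<lambda>z. \<chi> i. dhi i (z $ i)) y x)"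
proof -
  define \<psi> where "\<psi> y = gf x \<bullet> (y - x)
      + L * bregman (\<lambda>z. \<Sum>i\<in>UNIV. hi i (z $ i)) (\<lambda>z. \<chi> i. dhi i (z $ i)) y x" for y
  define \<phi> where "\<phi> k t = gf x $ k * (t - x $ k)
      + L * (hi k t - hi k (x $ k) - dhi k (x $ k) * (t - x $ k))" for k t
  have descent: "f y \<le> f x + \<psi> y" for y
    unfolding \<psi>_def add.assoc[symmetric]
    by (rule relative_smoothness_descent[OF f_deriv separable_has_derivative[OF hi_deriv] rel_smooth])
  have "\<psi> x = 0" by (simp add: \<psi>_def bregman_def)
  then have "f y - f x \<le> \<psi> y - \<psi> x" for y
    using descent[of y] by simp
  with cw have "CW_minimum \<psi> s x" by (rule CW_minimum_mono)
  moreover have "\<psi> = (\<lambda>y. \<Sum>k\<in>UNIV. \<phi> k (y $ k))"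
    by (auto simp: \<psi>_def \<phi>_def bregman_separable inner_vec_def sum.distrib sum_distrib_left)
  ultimately have "\<psi> x \<le> \<psi> y" if "y \<in> sparse_set s" for y
    using CW_minimum_separable_imp_sparse_minimum[OF _ that] by simp
  with cw show ?thesis by (simp add: CW_minimum_def \<psi>_def)
qed

end
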